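(* Let $K$ be a commutative Noetherian ring with $1$ and let $X$ be a finite set. Every right ideal $R$ of the free $K$-algebra $K\langle X\rangle$ such that $K\langle X\rangle/R$ is a finitely generated $K$-module is finitely presented as a $K$-algebra.
   Context: The free $K$-algebra $K\langle X\rangle$ is the semigroup ring over $K$ of the free semigroup $X^+$ (polynomials in non-commuting variables from $X$ without constant term; no identity). A $K$-algebra is finitely presented if it is isomorphic to $K\langle Y\rangle/I$ with $Y$ finite and $I$ an ideal of $K\langle Y\rangle$ finitely generated as an ideal. *)

theory Defs
  imports Main
begin

definition ring_ideal :: "'k::comm_ring_1 set \<Rightarrow> bool" where
  "ring_ideal I \<longleftrightarrow> 0 \<in> I \<and> (\<forall>a\<in>I. \<forall>b\<in>I. a + b \<in> I) \<and> (\<forall>r. \<forall>a\<in>I. r * a \<in> I)"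

definition noetherian_ring :: "'k::comm_ring_1 itself \<Rightarrow> bool" where
  "noetherian_ring _ \<longleftrightarrow>
     (\<forall>I::'k set. ring_ideal I \<longrightarrow>
        (\<exists>G. finite G \<and> G \<subseteq> I \<and> I = {\<Sum>g\<in>G. c g * g | c. True}))"

text \<open>Elements of K<X> are finitely supported functions from words to K,
  supported on nonempty words over the alphabet X (no constant term).\<close>

definition free_alg :: "'x set \<Rightarrow> ('x list \<Rightarrow> 'k::comm_ring_1) set" where
  "free_alg X = {p. finite {w. p w \<noteq> 0} \<and> (\<forall>w. p w \<noteq> 0 \<longrightarrow> w \<noteq> [] \<and> set w \<subseteq> X)}"

definition fa_mult :: "('x list \<Rightarrow> 'k::comm_ring_1) \<Rightarrow> ('x list \<Rightarrow> 'k) \<Rightarrow> ('x list \<Rightarrow> 'k)" where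
  "fa_mult p q = (\<lambda>w. \<Sum>i\<in>{0..length w}. p (take i w) * q (drop i w))"

definition fa_smult :: "'k::comm_ring_1 \<Rightarrow> ('x list \<Rightarrow> 'k) \<Rightarrow> ('x list \<Rightarrow> 'k)" where
  "fa_smult c p = (\<lambda>w. c * p w)"

text \<open>Addition, subtraction and zero are pointwise.\<close>

definition right_ideal :: "'x set \<Rightarrow> ('x list \<Rightarrow> 'k::comm_ring_1) set \<Rightarrow> bool" where
  "right_ideal X R \<longleftrightarrow> R \<subseteq> free_alg X \<and> (\<lambda>_. 0) \<in> R \<and>
     (\<forall>a\<in>R. \<forall>b\<in>R. (\<lambda>w. a w + b w) \<in> R) \<and> (\<forall>c. \<forall>a\<in>R. fa_smult c a \<in> R) \<and>
     (\<forall>a\<in>R. \<forall>p\<in>free_alg X. fa_mult a p \<in> R)"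

definition two_sided_ideal :: "'x set \<Rightarrow> ('x list \<Rightarrow> 'k::comm_ring_1) set \<Rightarrow> bool" where
  "two_sided_ideal X I \<longleftrightarrow> I \<subseteq> free_alg X \<and> (\<lambda>_. 0) \<in> I \<and>
     (\<forall>a\<in>I. \<forall>b\<in>I. (\<lambda>w. a w + b w) \<in> I) \<and> (\<forall>c. \<forall>a\<in>I. fa_smult c a \<in> I) \<and>
     (\<forall>a\<in>I. \<forall>p\<in>free_alg X. fa_mult a p \<in> I \<and> fa_mult p a \<in> I)"

definition ideal_generated :: "'x set \<Rightarrow> ('x list \<Rightarrow> 'k::comm_ring_1) set \<Rightarrow> ('x list \<Rightarrow> 'k) set" where
  "ideal_generated X G = \<Inter>{I. two_sided_ideal X I \<and> G \<subseteq> I}"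

definition quotient_fg_module :: "'x set \<Rightarrow> ('x list \<Rightarrow> 'k::comm_ring_1) set \<Rightarrow> bool" where
  "quotient_fg_module X R \<longleftrightarrow>
     (\<exists>F. finite F \<and> F \<subseteq> free_alg X \<and>
        (\<forall>p\<in>free_alg X. \<exists>c. (\<lambda>w. p w - (\<Sum>f\<in>F. c f * f w)) \<in> R))"

definition alg_hom_onto :: "nat set \<Rightarrow> 'x set \<Rightarrow> ('x list \<Rightarrow> 'k::comm_ring_1) set
      \<Rightarrow> ((nat list \<Rightarrow> 'k) \<Rightarrow> ('x list \<Rightarrow> 'k)) \<Rightarrow> bool" where
  "alg_hom_onto Y X A \<phi> \<longleftrightarrow>
     \<phi> ` free_alg Y = A \<and>
     (\<forall>p\<in>free_alg Y. \<forall>q\<in>free_alg Y. \<phi> (\<lambda>w. p w + q w) = (\<lambda>w. \<phi> p w + \<phi> q w) \<and> \<phi> (fa_mult p q) = fa_mult (\<phi> p) (\<phi> q)) \<and>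
     (\<forall>c. \<forall>p\<in>free_alg Y. \<phi> (fa_smult c p) = fa_smult c (\<phi> p))"

text \<open>A subalgebra A of K<X> is finitely presented as a K-algebra iff it is isomorphic to
  K<Y>/I with Y finite and I a finitely generated ideal; equivalently (first isomorphism
  theorem) there is a surjective K-algebra homomorphism K<Y> \<rightarrow> A whose kernel is a
  finitely generated ideal. Y is taken as a finite set of naturals (any finite set is in
  bijection with one).\<close>
definition finitely_presented_sub :: "'x set \<Rightarrow> ('x list \<Rightarrow> 'k::comm_ring_1) set \<Rightarrow> bool" where
  "finitely_presented_sub X A \<longleftrightarrow>
     (\<exists>(Y::nat set) \<phi> G. finite Y \<and> alg_hom_onto Y X A \<phi> \<and> finite G \<and> G \<subseteq> free_alg Y \<and>
        {p\<in>free_alg Y. \<phi> p = (\<lambda>_. 0)} = ideal_generated Y G)"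

end

theory Submission
  imports Defs "HOL-Library.Poly_Mapping"
begin

text \<open>Let \<open>F\<close> span \<open>K\<langle>X\<rangle>/R\<close> and let \<open>D\<close> bound the degrees in \<open>F\<close>. Every word
  \<open>w\<close> is congruent modulo \<open>R\<close> to some \<open>\<rho> w\<close> of degree at most \<open>D\<close>, so
  \<open>r w = w - \<rho> w \<in> R\<close>. Splitting a long word as \<open>w = v u\<close> with \<open>|u| = D + 1\<close> gives
  \<open>r (v u) = r v \<cdot> r u + \<Sum>\<^sub>t (\<rho> u)\<^sub>t r (v t) + \<lambda>(v, u)\<close>,
  where the defect \<open>\<lambda>(v, u) \<in> R\<close> has degree at most \<open>E = 2 D + 1\<close>. Hence \<open>R\<close> is generated
  as an algebra by its elements of degree at most \<open>E\<close>, which form a finitely generated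
  \<open>K\<close>-module because \<open>K\<close> is Noetherian; module generators \<open>g\<^sub>i\<close> give a surjection
  \<open>\<phi> : K\<langle>Y\<rangle> \<rightarrow> R\<close>, \<open>y\<^sub>i \<mapsto> g\<^sub>i\<close>. Following the recursion yields a lift \<open>nf s\<close> of
  every \<open>s \<in> R\<close>, whose degree is bounded uniformly when \<open>deg s \<le> 2 E\<close>. The kernel
  elements of degree at most one more than this bound again form a finitely generated
  module. Modulo the ideal \<open>J\<close> they generate, every \<open>p\<close> is congruent to \<open>nf (\<phi> p)\<close>:
  along the recursion, the identities used to build \<open>nf\<close> hold modulo \<open>J\<close> because their
  low-degree instances lie in \<open>J\<close>. So the kernel of \<open>\<phi>\<close> is finitely generated.\<close>

section \<open>Noncommutative polynomials\<close>

text \<open>With words forming the free monoid, \<open>'a list \<Rightarrow>\<^sub>0 'k\<close> is the unital free algebra; \<open>K\<langle>X\<rangle>\<close>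
  is its part without constant term and with letters in \<open>X\<close> (\<open>in_free X\<close> below).\<close>

instantiation list :: (type) monoid_add
begin
definition zero_list :: "'a list" where "zero_list = []"
definition plus_list :: "'a list \<Rightarrow> 'a list \<Rightarrow> 'a list" where "plus_list xs ys = xs @ ys"
instance by standard (auto simp: zero_list_def plus_list_def)
end

type_synonym ('a,'k) ncpoly = "'a list \<Rightarrow>\<^sub>0 'k"

abbreviation coeff :: "('a \<Rightarrow>\<^sub>0 'k::zero) \<Rightarrow> 'a \<Rightarrow> 'k" where "coeff \<equiv> Poly_Mapping.lookup"
abbreviation supp :: "('a \<Rightarrow>\<^sub>0 'k::zero) \<Rightarrow> 'a set" where "supp \<equiv> Poly_Mapping.keys"

lemma lookup_mult_keys:
  "coeff (p * q) w = (\<Sum>a\<in>supp p. \<Sum>b\<in>supp q. if a + b = w then coeff p a * coeff q b else (0::'k::semiring_0))"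
proof -
  have "coeff (p * q) w = (\<Sum>a. coeff p a * (\<Sum>b. coeff q b when w = a + b))"
    by (rule lookup_mult)
  also have "\<dots> = (\<Sum>a\<in>supp p. coeff p a * (\<Sum>b\<in>supp q. coeff q b when w = a + b))"
  proof (subst Sum_any.expand_superset[of "supp p"])
    show "(\<Sum>a\<in>supp p. coeff p a * (\<Sum>b. coeff q b when w = a + b))
        = (\<Sum>a\<in>supp p. coeff p a * (\<Sum>b\<in>supp q. coeff q b when w = a + b))"
      by (intro sum.cong refl arg_cong2[where f = "(*)"] Sum_any.expand_superset)
        (auto simp: in_keys_iff when_def)
  qed (auto simp: in_keys_iff)
  also have "\<dots> = (\<Sum>a\<in>supp p. \<Sum>b\<in>supp q. if a + b = w then coeff p a * coeff q b else 0)"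
    by (auto simp: sum_distrib_left when_def intro!: sum.cong)
  finally show ?thesis .
qed

definition smult :: "'k::comm_ring_1 \<Rightarrow> ('a,'k) ncpoly \<Rightarrow> ('a,'k) ncpoly" where
  "smult c p = Poly_Mapping.map ((*) c) p"

lemma lookup_smult [simp]: "coeff (smult c p) w = c * coeff p w"
  by (simp add: smult_def map.rep_eq when_def)

lemma smult_single: "smult c p = Poly_Mapping.single 0 c * p"
  by (simp add: smult_def mult_map_scale_conv_mult)

lemma mult_single_0_commute: "p * Poly_Mapping.single 0 c = Poly_Mapping.single 0 c * (p::('a,'k::comm_ring_1) ncpoly)"
  by (rule poly_mapping_eqI) (simp add: lookup_mult_keys lookup_single when_def mult.commute)

lemma smult_mult_left: "smult c (p * q) = smult c p * q"
  by (simp add: smult_single mult.assoc)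

lemma smult_mult_right: "p * smult c q = smult c (p * q)"
  by (simp add: smult_single mult.assoc[symmetric] mult_single_0_commute)

lemma smult_add_right: "smult c (p + q) = smult c p + smult c q"
  by (rule poly_mapping_eqI) (simp add: lookup_add algebra_simps)
lemma smult_add_left: "smult (c + d) p = smult c p + smult d p"
  by (rule poly_mapping_eqI) (simp add: lookup_add algebra_simps)
lemma smult_diff_right: "smult c (p - q) = smult c p - smult c q"
  by (rule poly_mapping_eqI) (simp add: lookup_minus algebra_simps)
lemma smult_minus_left: "smult (-c) q = - smult c q"
  by (rule poly_mapping_eqI) (simp add: algebra_simps)
lemma smult_smult: "smult c (smult d p) = smult (c*d) p"
  by (rule poly_mapping_eqI) (simp add: algebra_simps)
lemma smult_1_left [simp]: "smult 1 p = p"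
  by (rule poly_mapping_eqI) simp
lemma smult_0_left [simp]: "smult 0 p = 0"
  by (rule poly_mapping_eqI) simp
lemma smult_0_right [simp]: "smult c 0 = 0"
  by (rule poly_mapping_eqI) simp
lemma smult_sum: "smult c (sum f S) = (\<Sum>x\<in>S. smult c (f x))"
  by (rule poly_mapping_eqI) (simp add: lookup_sum sum_distrib_left)
lemma keys_smult: "supp (smult c p) \<subseteq> supp p"
  by (auto simp: in_keys_iff)

definition mon :: "'a list \<Rightarrow> ('a,'k::comm_ring_1) ncpoly" where
  "mon w = Poly_Mapping.single w 1"

lemma mon_append: "mon (a @ b) = mon a * mon b"
  by (simp add: mon_def mult_single plus_list_def)

lemma keys_mon [simp]: "supp (mon w :: ('a,'k::comm_ring_1) ncpoly) = {w}"
  by (simp add: mon_def)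

lemma lookup_mon: "coeff (mon w) v = (if v = w then 1 else 0)"
  by (simp add: mon_def lookup_single when_def)

definition lin_ext :: "('a list \<Rightarrow> ('b,'k) ncpoly) \<Rightarrow> ('a,'k::comm_ring_1) ncpoly \<Rightarrow> ('b,'k) ncpoly" where
  "lin_ext f p = (\<Sum>b\<in>supp p. smult (coeff p b) (f b))"

lemma lin_ext_superset: "finite S \<Longrightarrow> supp p \<subseteq> S \<Longrightarrow> lin_ext f p = (\<Sum>b\<in>S. smult (coeff p b) (f b))"
  unfolding lin_ext_def by (rule sum.mono_neutral_left) (auto simp: in_keys_iff)

lemma lin_ext_zero [simp]: "lin_ext f 0 = 0"
  by (simp add: lin_ext_def)

lemma lin_ext_add: "lin_ext f (p + q) = lin_ext f p + lin_ext f q"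
proof -
  let ?S = "supp p \<union> supp q"
  have "lin_ext f (p+q) = (\<Sum>b\<in>?S. smult (coeff (p+q) b) (f b))"
    by (rule lin_ext_superset) (auto simp: keys_add)
  also have "\<dots> = (\<Sum>b\<in>?S. smult (coeff p b) (f b)) + (\<Sum>b\<in>?S. smult (coeff q b) (f b))"
    by (simp add: lookup_add smult_add_left sum.distrib)
  also have "\<dots> = lin_ext f p + lin_ext f q"
  proof -
    have "lin_ext f p = (\<Sum>b\<in>?S. smult (coeff p b) (f b))" "lin_ext f q = (\<Sum>b\<in>?S. smult (coeff q b) (f b))"
      by (rule lin_ext_superset, auto)+
    then show ?thesis by simp
  qed
  finally show ?thesis .
qed

lemma lin_ext_smult: "lin_ext f (smult c p) = smult c (lin_ext f p)"
proof -
  have "lin_ext f (smult c p) = (\<Sum>b\<in>supp p. smult (coeff (smult c p) b) (f b))"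
    by (rule lin_ext_superset) (auto simp: keys_smult)
  then show ?thesis by (simp add: lin_ext_def smult_sum smult_smult)
qed

lemma lin_ext_minus: "lin_ext f (- p) = - lin_ext f p"
  using lin_ext_smult[of f "-1" p] by (simp add: smult_minus_left)

lemma lin_ext_diff: "lin_ext f (p - q) = lin_ext f p - lin_ext f q"
  using lin_ext_add[of f p "-q"] by (simp add: lin_ext_minus)

lemma lin_ext_sum: "lin_ext f (sum g S) = (\<Sum>x\<in>S. lin_ext f (g x))"
  by (induction S rule: infinite_finite_induct) (auto simp: lin_ext_add)

lemma lin_ext_single: "lin_ext f (Poly_Mapping.single w c) = smult c (f w)"
  by (cases "c = 0") (auto simp: lin_ext_def)

lemma lin_ext_mon: "lin_ext f (mon w) = f w"
  by (simp add: mon_def lin_ext_single)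

lemma lin_ext_cong: "(\<And>b. b \<in> supp p \<Longrightarrow> f b = g b) \<Longrightarrow> lin_ext f p = lin_ext g p"
  by (simp add: lin_ext_def)

lemma lookup_lin_ext: "coeff (lin_ext f p) w = (\<Sum>b\<in>supp p. coeff p b * coeff (f b) w)"
  by (simp add: lin_ext_def lookup_sum)

lemma lin_ext_mon_id: "lin_ext mon p = p"
  by (rule poly_mapping_eqI) (auto simp: lookup_lin_ext lookup_mon in_keys_iff if_distrib cong: if_cong)

lemma lin_ext_add_fun: "lin_ext (\<lambda>b. f b + g b) p = lin_ext f p + lin_ext g p"
  by (simp add: lin_ext_def smult_add_right sum.distrib)

lemma lin_ext_smult_fun: "lin_ext (\<lambda>b. smult c (f b)) p = smult c (lin_ext f p)"
  by (simp add: lin_ext_def smult_smult smult_sum mult.commute)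

lemma lin_ext_diff_fun: "lin_ext (\<lambda>b. f b - g b) p = lin_ext f p - lin_ext g p"
  using lin_ext_add_fun[of f "\<lambda>b. - g b" p] lin_ext_smult_fun[of "-1" g p]
  by (simp add: smult_minus_left)

lemma lin_ext_mult_right: "lin_ext f p * q = lin_ext (\<lambda>b. f b * q) p"
  by (simp add: lin_ext_def sum_distrib_right smult_mult_left)

lemma lin_ext_mult_left: "q * lin_ext f p = lin_ext (\<lambda>b. q * f b) p"
  by (simp add: lin_ext_def sum_distrib_left smult_mult_right)

lemma lin_ext_lin_ext: "lin_ext g (lin_ext f p) = lin_ext (\<lambda>b. lin_ext g (f b)) p"
  by (simp only: lin_ext_def[of f p] lin_ext_def[of "\<lambda>b. lin_ext g (f b)" p] lin_ext_sum lin_ext_smult)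

lemma lin_ext_comp_linear:
  assumes "\<And>x y. h (x + y) = h x + h y" "\<And>c x. h (smult c x) = smult c (h x)"
  shows "h (lin_ext f p) = lin_ext (\<lambda>b. h (f b)) p"
proof -
  have h0: "h 0 = 0" using assms(2)[of 0 0] by simp
  have hs: "h (sum g S) = (\<Sum>x\<in>S. h (g x))" for g and S :: "'z set"
    by (induction S rule: infinite_finite_induct) (auto simp: assms h0)
  show ?thesis unfolding lin_ext_def hs assms ..
qed

lemma lin_ext_mult:
  assumes "\<And>a b. F (a @ b) = F a * F b"
  shows "lin_ext F (p * q) = lin_ext F p * lin_ext F q"
proof -
  have "p * q = lin_ext mon p * lin_ext mon q" by (simp add: lin_ext_mon_id)
  also have "\<dots> = lin_ext (\<lambda>a. mon a * lin_ext mon q) p" by (rule lin_ext_mult_right)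
  also have "\<dots> = lin_ext (\<lambda>a. lin_ext (\<lambda>b. mon (a @ b)) q) p"
    by (simp add: lin_ext_mult_left mon_append)
  finally have 1: "p * q = lin_ext (\<lambda>a. lin_ext (\<lambda>b. mon (a @ b)) q) p" .
  have "lin_ext F (p * q) = lin_ext (\<lambda>a. lin_ext (\<lambda>b. F a * F b) q) p"
    unfolding 1 lin_ext_lin_ext by (simp add: lin_ext_mon assms)
  also have "\<dots> = lin_ext (\<lambda>a. F a * lin_ext F q) p"
    by (simp add: lin_ext_mult_left)
  also have "\<dots> = lin_ext F p * lin_ext F q"
    by (simp add: lin_ext_mult_right)
  finally show ?thesis .
qed

section \<open>Finitely generated submodules over a Noetherian ring\<close>

definition span :: "('a,'k::comm_ring_1) ncpoly set \<Rightarrow> ('a,'k) ncpoly set" where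
  "span B = {p. \<exists>c. p = (\<Sum>b\<in>B. smult (c b) b)}"

lemma span_0: "0 \<in> span B"
  unfolding span_def by (rule CollectI, rule exI[of _ "\<lambda>_. 0"]) simp

lemma span_add:
  assumes "x \<in> span B" "y \<in> span B"
  shows "x + y \<in> span B"
proof -
  obtain c d where "x = (\<Sum>b\<in>B. smult (c b) b)" "y = (\<Sum>b\<in>B. smult (d b) b)"
    using assms by (auto simp: span_def)
  then show ?thesis unfolding span_def
    by (intro CollectI exI[of _ "\<lambda>b. c b + d b"]) (simp add: smult_add_left sum.distrib)
qed

lemma span_smult:
  assumes "x \<in> span B"
  shows "smult a x \<in> span B"
proof -
  obtain c where "x = (\<Sum>b\<in>B. smult (c b) b)" using assms by (auto simp: span_def)
  then show ?thesis unfolding span_def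
    by (intro CollectI exI[of _ "\<lambda>b. a * c b"]) (simp add: smult_sum smult_smult)
qed

lemma span_sum: "(\<And>i. i \<in> S \<Longrightarrow> f i \<in> span B) \<Longrightarrow> sum f S \<in> span B"
  by (induction S rule: infinite_finite_induct) (auto simp: span_0 span_add)

lemma span_base: "finite B \<Longrightarrow> b \<in> B \<Longrightarrow> b \<in> span B"
  unfolding span_def
proof (rule CollectI, rule exI[of _ "\<lambda>x. if x = b then 1 else 0"])
  assume "finite B" "b \<in> B"
  have "(\<Sum>x\<in>B. smult (if x = b then 1 else 0) x) = (\<Sum>x\<in>B. if x = b then b else 0)"
    by (rule sum.cong) auto
  also have "\<dots> = b" using \<open>finite B\<close> \<open>b \<in> B\<close> by (simp add: sum.delta)
  finally show "b = (\<Sum>x\<in>B. smult (if x = b then 1 else 0) x)" by simp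
qed

lemma span_mono: "finite B2 \<Longrightarrow> B1 \<subseteq> B2 \<Longrightarrow> span B1 \<subseteq> span B2"
proof
  fix x assume f: "finite B2" and s: "B1 \<subseteq> B2" and "x \<in> span B1"
  then obtain c where "x = (\<Sum>b\<in>B1. smult (c b) b)" unfolding span_def by blast
  also have "\<dots> \<in> span B2"
    by (rule span_sum, rule span_smult, rule span_base) (use f s in auto)
  finally show "x \<in> span B2" .
qed

definition submodule :: "('a,'k::comm_ring_1) ncpoly set \<Rightarrow> bool" where
  "submodule M \<longleftrightarrow> 0 \<in> M \<and> (\<forall>p\<in>M. \<forall>q\<in>M. p + q \<in> M) \<and> (\<forall>c. \<forall>p\<in>M. smult c p \<in> M)"

lemma submodule_sum: "submodule M \<Longrightarrow> (\<And>i. i \<in> S \<Longrightarrow> f i \<in> M) \<Longrightarrow> sum f S \<in> M"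
  unfolding submodule_def by (induction S rule: infinite_finite_induct) auto

lemma submodule_diff: "submodule M \<Longrightarrow> p \<in> M \<Longrightarrow> q \<in> M \<Longrightarrow> p - q \<in> M"
  unfolding submodule_def by (metis diff_conv_add_uminus smult_1_left smult_minus_left)

lemma span_subset: "submodule M \<Longrightarrow> B \<subseteq> M \<Longrightarrow> span B \<subseteq> M"
proof
  fix x assume M: "submodule M" "B \<subseteq> M" and "x \<in> span B"
  then obtain c where "x = (\<Sum>b\<in>B. smult (c b) b)" unfolding span_def by blast
  also have "\<dots> \<in> M" by (rule submodule_sum[OF M(1)]) (use M in \<open>auto simp: submodule_def\<close>)
  finally show "x \<in> M" .
qed

lemma ring_ideal_coeff_image:
  assumes "submodule M"
  shows "ring_ideal ((\<lambda>p. coeff p a) ` M)"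
  unfolding ring_ideal_def
proof (intro conjI ballI allI)
  show "0 \<in> (\<lambda>p. coeff p a) ` M" using assms by (force simp: submodule_def)
next
  fix x y assume "x \<in> (\<lambda>p. coeff p a) ` M" "y \<in> (\<lambda>p. coeff p a) ` M"
  then obtain p q where "p \<in> M" "q \<in> M" "x = coeff p a" "y = coeff q a" by blast
  then show "x + y \<in> (\<lambda>p. coeff p a) ` M" using assms
    by (intro image_eqI[of _ _ "p + q"]) (auto simp: submodule_def lookup_add)
next
  fix r x assume "x \<in> (\<lambda>p. coeff p a) ` M"
  then obtain p where "p \<in> M" "x = coeff p a" by blast
  then show "r * x \<in> (\<lambda>p. coeff p a) ` M" using assms
    by (intro image_eqI[of _ _ "smult r p"]) (auto simp: submodule_def)
qed

text \<open>Induction on the support: the coefficients at a new word \<open>a\<close> form an ideal of \<open>K\<close>;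
  lifts of its generators together with generators of \<open>{p \<in> M. coeff p a = 0}\<close> span \<open>M\<close>.\<close>

lemma noetherian_submodule_fg:
  assumes noeth: "noetherian_ring TYPE('k::comm_ring_1)" and fin: "finite S"
    and "submodule M" and "M \<subseteq> {p::('a,'k) ncpoly. supp p \<subseteq> S}"
  shows "\<exists>B. finite B \<and> B \<subseteq> M \<and> M = span B"
  using fin assms(3,4)
proof (induction S arbitrary: M rule: finite_induct)
  case empty
  then have "M \<subseteq> {0}" by auto
  then have "M = {0}" using empty.prems(1) by (auto simp: submodule_def)
  then show ?case by (intro exI[of _ "{}"]) (auto simp: span_def)
next
  case (insert a S M)
  define I where "I = (\<lambda>p. coeff p a) ` M"
  have "ring_ideal I" unfolding I_def using insert.prems(1) by (rule ring_ideal_coeff_image)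
  then obtain G where G: "finite G" "G \<subseteq> I" "I = {\<Sum>g\<in>G. c g * g | c. True}"
    using noeth[unfolded noetherian_ring_def, rule_format, OF \<open>ring_ideal I\<close>] by auto
  have "\<forall>g\<in>G. \<exists>p\<in>M. coeff p a = g" using G(2) by (auto simp: I_def)
  then obtain pre where pre: "\<And>g. g \<in> G \<Longrightarrow> pre g \<in> M \<and> coeff (pre g) a = g" by metis
  define M' where "M' = {p\<in>M. coeff p a = 0}"
  have "submodule M'" using insert.prems unfolding M'_def submodule_def by (auto simp: lookup_add)
  moreover have "M' \<subseteq> {p. supp p \<subseteq> S}" using insert.prems unfolding M'_def by (auto simp: in_keys_iff)
  ultimately obtain B' where B': "finite B'" "B' \<subseteq> M'" "M' = span B'" using insert.IH by meson
  define B where "B = pre ` G \<union> B'"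
  have finB: "finite B" using B' G by (simp add: B_def)
  have BM: "B \<subseteq> M" using B' pre unfolding B_def M'_def by auto
  have "M \<subseteq> span B"
  proof
    fix p assume p: "p \<in> M"
    then have "coeff p a \<in> I" by (simp add: I_def)
    then obtain c where c: "coeff p a = (\<Sum>g\<in>G. c g * g)" using G(3) by blast
    define x where "x = (\<Sum>g\<in>G. smult (c g) (pre g))"
    have xM: "x \<in> M" unfolding x_def
      by (rule submodule_sum[OF insert.prems(1)]) (use insert.prems(1) pre in \<open>auto simp: submodule_def\<close>)
    have xs: "x \<in> span B" unfolding x_def
      by (rule span_sum, rule span_smult, rule span_base[OF finB]) (auto simp: B_def)
    have "p - x \<in> M'" unfolding M'_def
      using submodule_diff[OF insert.prems(1) p xM] by (simp add: lookup_minus x_def lookup_sum c pre)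
    then have "p - x \<in> span B" using B' span_mono[OF finB, of B'] by (auto simp: B_def)
    then have "(p - x) + x \<in> span B" using xs span_add by blast
    then show "p \<in> span B" by simp
  qed
  moreover have "span B \<subseteq> M" using span_subset[OF insert.prems(1) BM] .
  ultimately show ?case using finB BM by blast
qed

definition all_keys :: "('a list \<Rightarrow> bool) \<Rightarrow> ('a,'k::comm_ring_1) ncpoly \<Rightarrow> bool" where
  "all_keys Q p \<longleftrightarrow> (\<forall>m\<in>supp p. Q m)"

lemma all_keys_0 [simp]: "all_keys Q 0" by (simp add: all_keys_def)
lemma all_keys_add: "all_keys Q p \<Longrightarrow> all_keys Q q \<Longrightarrow> all_keys Q (p + q)"
  using keys_add[of p q] by (auto simp: all_keys_def)
lemma all_keys_minus: "all_keys Q p \<Longrightarrow> all_keys Q (- p)"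
  by (simp add: all_keys_def)
lemma all_keys_diff: "all_keys Q p \<Longrightarrow> all_keys Q q \<Longrightarrow> all_keys Q (p - q)"
  using keys_diff[of p q] by (auto simp: all_keys_def)
lemma all_keys_smult: "all_keys Q p \<Longrightarrow> all_keys Q (smult c p)"
  using keys_smult[of c p] by (auto simp: all_keys_def)
lemma all_keys_sum: "(\<And>i. i \<in> S \<Longrightarrow> all_keys Q (f i)) \<Longrightarrow> all_keys Q (sum f S)"
  by (induction S rule: infinite_finite_induct) (auto simp: all_keys_add)
lemma all_keys_lin_ext: "(\<And>b. b \<in> supp p \<Longrightarrow> all_keys Q (f b)) \<Longrightarrow> all_keys Q (lin_ext f p)"
  unfolding lin_ext_def by (rule all_keys_sum) (auto intro: all_keys_smult)
lemma all_keys_mon: "all_keys Q (mon w :: ('a,'k::comm_ring_1) ncpoly) \<longleftrightarrow> Q w"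
  by (simp add: all_keys_def)
lemma all_keys_submodule: "submodule {p::('a,'k::comm_ring_1) ncpoly. all_keys Q p}"
  by (auto simp: submodule_def all_keys_add all_keys_smult)

definition words :: "'a set \<Rightarrow> 'a list set" where
  "words X = {w. w \<noteq> [] \<and> set w \<subseteq> X}"

abbreviation in_free :: "'a set \<Rightarrow> ('a,'k::comm_ring_1) ncpoly \<Rightarrow> bool" where
  "in_free X \<equiv> all_keys (\<lambda>m. m \<in> words X)"

abbreviation deg_le :: "('a,'k::comm_ring_1) ncpoly \<Rightarrow> nat \<Rightarrow> bool" where
  "deg_le p d \<equiv> all_keys (\<lambda>m. length m \<le> d) p"

lemma in_free_mult: "in_free X p \<Longrightarrow> in_free X q \<Longrightarrow> in_free X (p * q)"
  using keys_mult[of p q] by (fastforce simp: all_keys_def words_def plus_list_def)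

lemma deg_le_mult: "deg_le p d1 \<Longrightarrow> deg_le q d2 \<Longrightarrow> deg_le (p * q) (d1 + d2)"
  using keys_mult[of p q] by (fastforce simp: all_keys_def plus_list_def)

lemma deg_le_mono: "deg_le p d1 \<Longrightarrow> d1 \<le> d2 \<Longrightarrow> deg_le p d2"
  by (auto simp: all_keys_def)

lemma words_append: "v \<in> words X \<Longrightarrow> u \<in> words X \<Longrightarrow> v @ u \<in> words X"
  by (auto simp: words_def)

lemma finite_words_le: "finite X \<Longrightarrow> finite {w. w \<in> words X \<and> length w \<le> d}"
  by (rule finite_subset[OF _ finite_lists_length_le[of X d]]) (auto simp: words_def)

definition nc_ideal :: "'a set \<Rightarrow> ('a,'k::comm_ring_1) ncpoly set \<Rightarrow> bool" where
  "nc_ideal X J \<longleftrightarrow> submodule J \<and> (\<forall>a\<in>J. \<forall>p. in_free X p \<longrightarrow> p * a \<in> J \<and> a * p \<in> J)"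

section \<open>Generators of \<open>R\<close> and lifts to \<open>K\<langle>Y\<rangle>\<close>\<close>

locale bounded_reduction =
  fixes X :: "'a set" and R :: "('a,'k::comm_ring_1) ncpoly set" and D :: nat
    and rho :: "'a list \<Rightarrow> ('a,'k) ncpoly"
  assumes noeth: "noetherian_ring TYPE('k)"
    and finX: "finite X"
    and R_in_free: "\<And>p. p \<in> R \<Longrightarrow> in_free X p"
    and R_submodule: "submodule R"
    and R_mult: "\<And>p q. p \<in> R \<Longrightarrow> in_free X q \<Longrightarrow> p * q \<in> R"
    and rho_in_free: "\<And>w. w \<in> words X \<Longrightarrow> in_free X (rho w)"
    and rho_deg_le: "\<And>w. w \<in> words X \<Longrightarrow> deg_le (rho w) D"
    and rho_R: "\<And>w. w \<in> words X \<Longrightarrow> mon w - rho w \<in> R"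
begin

lemma R_add: "p \<in> R \<Longrightarrow> q \<in> R \<Longrightarrow> p + q \<in> R"
  using R_submodule by (simp add: submodule_def)
lemma R_smult: "p \<in> R \<Longrightarrow> smult c p \<in> R"
  using R_submodule by (simp add: submodule_def)
lemma R_0: "0 \<in> R"
  using R_submodule by (simp add: submodule_def)
lemma R_diff: "p \<in> R \<Longrightarrow> q \<in> R \<Longrightarrow> p - q \<in> R"
  using R_submodule by (rule submodule_diff)
lemma R_mult_R: "p \<in> R \<Longrightarrow> q \<in> R \<Longrightarrow> p * q \<in> R"
  using R_mult R_in_free by blast
lemma R_lin_ext: "(\<And>b. b \<in> supp p \<Longrightarrow> f b \<in> R) \<Longrightarrow> lin_ext f p \<in> R"
  unfolding lin_ext_def by (rule submodule_sum[OF R_submodule]) (auto intro: R_smult)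
lemma R_sum: "(\<And>i. i \<in> S \<Longrightarrow> f i \<in> R) \<Longrightarrow> sum f S \<in> R"
  by (rule submodule_sum[OF R_submodule])

definition "E = 2 * D + 1"

definition rel :: "'a list \<Rightarrow> ('a,'k) ncpoly" where "rel w = mon w - rho w"

lemma rel_in_R: "w \<in> words X \<Longrightarrow> rel w \<in> R"
  by (simp add: rel_def rho_R)

lemma rho_keys: "w \<in> words X \<Longrightarrow> t \<in> supp (rho w) \<Longrightarrow> t \<in> words X \<and> length t \<le> D"
  using rho_in_free[of w] rho_deg_le[of w] by (auto simp: all_keys_def)

definition "R_low = {r\<in>R. deg_le r E}"

lemma R_low_R: "h \<in> R_low \<Longrightarrow> h \<in> R"
  by (simp add: R_low_def)

lemma R_low_deg_le: "h \<in> R_low \<Longrightarrow> deg_le h E"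
  by (simp add: R_low_def)

lemma R_low_submodule: "submodule R_low"
  using R_submodule unfolding R_low_def submodule_def by (auto intro: all_keys_add all_keys_smult)

lemma R_low_keys: "R_low \<subseteq> {p. supp p \<subseteq> {w. set w \<subseteq> X \<and> length w \<le> E}}"
  unfolding R_low_def using R_in_free by (auto simp: all_keys_def words_def)

definition gens :: "('a,'k) ncpoly list" where
  "gens = (SOME gs. distinct gs \<and> set gs \<subseteq> R_low \<and> R_low = span (set gs))"

lemma gens: "distinct gens" "set gens \<subseteq> R_low" "R_low = span (set gens)"
proof -
  obtain B where B: "finite B" "B \<subseteq> R_low" "R_low = span B"
    using noetherian_submodule_fg[OF noeth finite_lists_length_le[OF finX] R_low_submodule R_low_keys]
    by blast
  obtain gs where "set gs = B" "distinct gs" using finite_distinct_list[OF B(1)] by blast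
  then have "\<exists>gs. distinct gs \<and> set gs \<subseteq> R_low \<and> R_low = span (set gs)" using B by blast
  then show "distinct gens" "set gens \<subseteq> R_low" "R_low = span (set gens)"
    unfolding gens_def by (metis (mono_tags, lifting) someI_ex)+
qed

definition "ngens = length gens"
definition gen :: "nat \<Rightarrow> ('a,'k) ncpoly" where "gen i = gens ! i"

lemma gen_R_low: "i < ngens \<Longrightarrow> gen i \<in> R_low"
  using gens(2) by (auto simp: gen_def ngens_def)

lemma gen_R: "i < ngens \<Longrightarrow> gen i \<in> R"
  using gen_R_low by (simp add: R_low_def)

definition phi :: "(nat,'k) ncpoly \<Rightarrow> ('a,'k) ncpoly" where
  "phi = lin_ext (\<lambda>m. prod_list (map gen m))"

lemma phi_add: "phi (p + q) = phi p + phi q" by (simp add: phi_def lin_ext_add)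
lemma phi_smult: "phi (smult c p) = smult c (phi p)" by (simp add: phi_def lin_ext_smult)
lemma phi_diff: "phi (p - q) = phi p - phi q" by (simp add: phi_def lin_ext_diff)
lemma phi_0: "phi 0 = 0" by (simp add: phi_def)
lemma phi_mult: "phi (p * q) = phi p * phi q"
  unfolding phi_def by (rule lin_ext_mult) simp
lemma phi_mon: "phi (mon m) = prod_list (map gen m)"
  by (simp add: phi_def lin_ext_mon)
lemma phi_lin_ext: "phi (lin_ext f p) = lin_ext (\<lambda>b. phi (f b)) p"
  by (rule lin_ext_comp_linear) (simp_all add: phi_add phi_smult)
lemma phi_sum: "phi (sum f S) = (\<Sum>i\<in>S. phi (f i))"
  by (induction S rule: infinite_finite_induct) (auto simp: phi_add phi_0)

abbreviation "in_free_Y \<equiv> in_free {..<ngens}"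

definition "linear_Y = span ((\<lambda>i. mon [i]) ` {..<ngens})"

lemma linear_Y_all_keys: assumes "\<And>i. i < ngens \<Longrightarrow> Q [i]" "l \<in> linear_Y" shows "all_keys Q l"
proof -
  have "linear_Y \<subseteq> {p. all_keys Q p}" unfolding linear_Y_def
    by (rule span_subset[OF all_keys_submodule]) (auto simp: all_keys_mon assms)
  then show ?thesis using assms by blast
qed

lemma linear_Y_in_free_Y: "l \<in> linear_Y \<Longrightarrow> in_free_Y l"
  by (rule linear_Y_all_keys) (auto simp: words_def)

lemma linear_Y_deg_le: "l \<in> linear_Y \<Longrightarrow> deg_le l 1"
  by (rule linear_Y_all_keys) auto

lemma mon_linear_Y: "i < ngens \<Longrightarrow> mon [i] \<in> linear_Y"
  unfolding linear_Y_def by (rule span_base) auto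

lemma linear_Y_0: "0 \<in> linear_Y"
  by (simp add: linear_Y_def span_0)

lemma linear_Y_add: "l \<in> linear_Y \<Longrightarrow> l' \<in> linear_Y \<Longrightarrow> l + l' \<in> linear_Y"
  by (simp add: linear_Y_def span_add)

lemma linear_Y_smult: "l \<in> linear_Y \<Longrightarrow> smult c l \<in> linear_Y"
  by (simp add: linear_Y_def span_smult)

lemma phi_linear_Y: "l \<in> linear_Y \<Longrightarrow> phi l \<in> R_low"
proof -
  have "submodule {l. phi l \<in> R_low}" using R_low_submodule
    by (auto simp: submodule_def phi_add phi_smult phi_0)
  then have "linear_Y \<subseteq> {l. phi l \<in> R_low}" unfolding linear_Y_def
    by (rule span_subset) (auto simp: phi_mon gen_R_low)
  then show "l \<in> linear_Y \<Longrightarrow> phi l \<in> R_low" by blast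
qed

lemma R_low_subset_phi_linear_Y: assumes "h \<in> R_low" shows "\<exists>l\<in>linear_Y. phi l = h"
proof -
  obtain c where c: "h = (\<Sum>b\<in>set gens. smult (c b) b)" using assms gens(3) by (auto simp: span_def)
  define l where "l = (\<Sum>i<ngens. smult (c (gen i)) (mon [i]))"
  have "l \<in> linear_Y" unfolding l_def linear_Y_def
    by (rule span_sum, rule span_smult, rule span_base) auto
  moreover have "phi l = h"
  proof -
    have "phi l = (\<Sum>i<ngens. smult (c (gens ! i)) (gens ! i))"
      by (simp add: l_def phi_sum phi_smult phi_mon gen_def)
    also have "\<dots> = (\<Sum>b\<in>set gens. smult (c b) b)"
      using sum.reindex_bij_betw[OF bij_betw_nth[OF gens(1) refl refl], of "\<lambda>b. smult (c b) b"]
      by (simp add: ngens_def)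
    finally show ?thesis using c by simp
  qed
  ultimately show ?thesis by blast
qed

definition lift :: "('a,'k) ncpoly \<Rightarrow> (nat,'k) ncpoly" where
  "lift h = (SOME l. l \<in> linear_Y \<and> phi l = h)"

lemma
  assumes "h \<in> R_low"
  shows lift_linear_Y: "lift h \<in> linear_Y" and phi_lift: "phi (lift h) = h"
  using someI_ex[of "\<lambda>l. l \<in> linear_Y \<and> phi l = h"] R_low_subset_phi_linear_Y[OF assms]
  unfolding lift_def by auto

definition defect :: "'a list \<Rightarrow> 'a list \<Rightarrow> ('a,'k) ncpoly" where
  "defect v u = rel (v @ u) - rel v * rel u - lin_ext (\<lambda>t. rel (v @ t)) (rho u)"

text \<open>The word \<open>v @ u\<close> cancels, so only terms of degree at most \<open>2 D + 1\<close> remain.\<close>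

lemma defect_eq: "defect v u = - rho (v @ u) + rho v * mon u - rho v * rho u + lin_ext (\<lambda>t. rho (v @ t)) (rho u)"
proof -
  have "lin_ext (\<lambda>t. rel (v @ t)) (rho u) = lin_ext (\<lambda>t. mon v * mon t) (rho u) - lin_ext (\<lambda>t. rho (v @ t)) (rho u)"
    by (simp add: rel_def mon_append lin_ext_diff_fun)
  also have "lin_ext (\<lambda>t. mon v * mon t) (rho u) = mon v * rho u"
    by (simp add: lin_ext_mult_left[symmetric] lin_ext_mon_id)
  finally show ?thesis
    by (simp add: defect_def rel_def mon_append algebra_simps)
qed

lemma defect_R_low: assumes "v \<in> words X" "u \<in> words X" "length u = D + 1" shows "defect v u \<in> R_low"
proof -
  have "defect v u \<in> R"
    unfolding defect_def using assms
    by (intro R_diff R_mult_R rel_in_R R_lin_ext words_append) (auto dest: rho_keys)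
  moreover have "deg_le (defect v u) E"
  proof -
    have vu: "v @ u \<in> words X" using assms(1,2) by (rule words_append)
    have 1: "deg_le (rho (v @ u)) E" using rho_deg_le[OF vu] by (rule deg_le_mono) (simp add: E_def)
    have 2: "deg_le (rho v * mon u) E"
      using deg_le_mult[of D "rho v" "D+1" "mon u"] rho_deg_le[OF assms(1)] assms(3)
      by (simp add: all_keys_mon E_def mult_2)
    have 3: "deg_le (rho v * rho u) E"
      using deg_le_mult[of D "rho v" D "rho u"] rho_deg_le[OF assms(1)] rho_deg_le[OF assms(2)]
      by (auto simp: E_def elim: deg_le_mono)
    have 4: "deg_le (lin_ext (\<lambda>t. rho (v @ t)) (rho u)) E"
      by (rule all_keys_lin_ext, rule deg_le_mono[OF rho_deg_le]) (auto simp: E_def words_append assms dest: rho_keys[OF assms(2)])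
    show ?thesis unfolding defect_eq by (intro all_keys_add all_keys_diff all_keys_minus 1 2 3 4)
  qed
  ultimately show ?thesis by (simp add: R_low_def)
qed

text \<open>The recursive call on \<open>v @ t\<close> is on a shorter word only because \<open>deg (rho u) \<le> D\<close>,
  which \<open>fun\<close> cannot see; the fuel argument is irrelevant once it is at least \<open>length w\<close>.\<close>

fun word_lift_fuel :: "nat \<Rightarrow> 'a list \<Rightarrow> (nat,'k) ncpoly" where
  "word_lift_fuel 0 w = lift (rel w)"
| "word_lift_fuel (Suc k) w = (if length w \<le> E then lift (rel w) else
     (let v = take (length w - (D+1)) w; u = drop (length w - (D+1)) w in
      word_lift_fuel k v * word_lift_fuel k u + lin_ext (\<lambda>t. word_lift_fuel k (v @ t)) (rho u) + lift (defect v u)))"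

definition word_lift :: "'a list \<Rightarrow> (nat,'k) ncpoly" where "word_lift w = word_lift_fuel (length w) w"

lemma word_lift_fuel_short: "length w \<le> E \<Longrightarrow> word_lift_fuel k w = lift (rel w)"
  by (cases k) auto

lemma word_lift_short: "length w \<le> E \<Longrightarrow> word_lift w = lift (rel w)"
  by (simp add: word_lift_def word_lift_fuel_short)

lemma long_word_split:
  assumes "w \<in> words X" "E < length w"
  defines "v \<equiv> take (length w - (D+1)) w" and "u \<equiv> drop (length w - (D+1)) w"
  shows "w = v @ u" "v \<in> words X" "u \<in> words X" "length u = D + 1" "length v < length w"
    "length u < length w" "\<And>t. t \<in> supp (rho u) \<Longrightarrow> v @ t \<in> words X \<and> length (v @ t) < length w"
proof -
  have l: "length w > D + 1 + D" using assms(2) by (simp add: E_def)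
  show "w = v @ u" by (simp add: v_def u_def)
  show "v \<in> words X" "u \<in> words X" using assms(1) l
    by (auto simp: words_def v_def u_def dest: in_set_takeD in_set_dropD)
  show "length u = D + 1" "length v < length w" "length u < length w" using l
    by (auto simp: v_def u_def)
  fix t assume "t \<in> supp (rho u)"
  then have "t \<in> words X" "length t \<le> D" using rho_keys[OF \<open>u \<in> words X\<close>] by auto
  then show "v @ t \<in> words X \<and> length (v @ t) < length w"
    using \<open>v \<in> words X\<close> l by (auto simp: words_append v_def)
qed

lemma long_word_splitE:
  assumes "w \<in> words X" "E < length w"
  obtains v u where "w = v @ u" "v \<in> words X" "u \<in> words X" "length u = D + 1"
    "length v < length w" "length u < length w"
    "\<And>t. t \<in> supp (rho u) \<Longrightarrow> v @ t \<in> words X \<and> length (v @ t) < length w"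
  using long_word_split[OF assms] by (rule that)

lemma word_lift_fuel_stable: "w \<in> words X \<Longrightarrow> length w \<le> k \<Longrightarrow> word_lift_fuel k w = word_lift w"
proof (induction "length w" arbitrary: w k rule: less_induct)
  case less
  show ?case
  proof (cases "length w \<le> E")
    case True then show ?thesis by (simp add: word_lift_fuel_short word_lift_short)
  next
    case False
    define v where "v = take (length w - (D+1)) w"
    define u where "u = drop (length w - (D+1)) w"
    note sf = long_word_split[OF less.prems(1), of, folded v_def u_def]
    have E: "E < length w" using False by simp
    obtain k' where k: "k = Suc k'" using less.prems(2) E by (cases k) auto
    obtain l' where l: "length w = Suc l'" using E by (cases "length w") auto
    have IH: "\<And>x. x \<in> words X \<Longrightarrow> length x < length w \<Longrightarrow> word_lift_fuel k' x = word_lift_fuel l' x"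
    proof -
      fix x assume x: "x \<in> words X" "length x < length w"
      have "word_lift_fuel k' x = word_lift x" using less.hyps[OF x(2) x(1)] x(2) less.prems(2) k by simp
      moreover have "word_lift_fuel l' x = word_lift x" using less.hyps[OF x(2) x(1)] x(2) l by simp
      ultimately show "word_lift_fuel k' x = word_lift_fuel l' x" by simp
    qed
    have "word_lift_fuel k w = word_lift_fuel k' v * word_lift_fuel k' u + lin_ext (\<lambda>t. word_lift_fuel k' (v @ t)) (rho u) + lift (defect v u)"
      using False by (simp add: k v_def u_def Let_def)
    also have "\<dots> = word_lift_fuel l' v * word_lift_fuel l' u + lin_ext (\<lambda>t. word_lift_fuel l' (v @ t)) (rho u) + lift (defect v u)"
      using sf[OF E] IH by (auto intro!: lin_ext_cong)
    also have "\<dots> = word_lift w"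
      using False by (simp add: word_lift_def l v_def u_def Let_def)
    finally show ?thesis .
  qed
qed

lemma word_lift_split:
  assumes "v \<in> words X" "u \<in> words X" "length u = D + 1" "E < length (v @ u)"
  shows "word_lift (v @ u) = word_lift v * word_lift u + lin_ext (\<lambda>t. word_lift (v @ t)) (rho u) + lift (defect v u)"
proof -
  obtain l where l: "length (v @ u) = Suc l" using assms(4) by (cases "length (v @ u)") auto
  have tk: "take (length (v @ u) - (D+1)) (v @ u) = v" "drop (length (v @ u) - (D+1)) (v @ u) = u"
    using assms(3) by auto
  have "word_lift (v @ u) = word_lift_fuel l v * word_lift_fuel l u + lin_ext (\<lambda>t. word_lift_fuel l (v @ t)) (rho u) + lift (defect v u)"
    unfolding word_lift_def l using assms(4) l tk by (simp add: Let_def)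
  also have "\<dots> = word_lift v * word_lift u + lin_ext (\<lambda>t. word_lift (v @ t)) (rho u) + lift (defect v u)"
  proof -
    have lv: "length v \<ge> 1" using assms(1) by (cases v) (auto simp: words_def)
    have "word_lift_fuel l v = word_lift v" by (rule word_lift_fuel_stable) (use assms l lv in auto)
    moreover have "word_lift_fuel l u = word_lift u" by (rule word_lift_fuel_stable) (use assms l lv in auto)
    moreover have "lin_ext (\<lambda>t. word_lift_fuel l (v @ t)) (rho u) = lin_ext (\<lambda>t. word_lift (v @ t)) (rho u)"
    proof (rule lin_ext_cong)
      fix t assume "t \<in> supp (rho u)"
      then have "t \<in> words X" "length t \<le> D" using rho_keys[OF assms(2)] by auto
      then show "word_lift_fuel l (v @ t) = word_lift (v @ t)"
        by (intro word_lift_fuel_stable) (use assms l words_append in auto)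
    qed
    ultimately show ?thesis by simp
  qed
  finally show ?thesis .
qed

lemma rel_R_low: "w \<in> words X \<Longrightarrow> length w \<le> E \<Longrightarrow> rel w \<in> R_low"
  unfolding R_low_def using rel_in_R[of w] rho_deg_le[of w]
  by (auto simp: rel_def all_keys_mon E_def intro!: all_keys_diff elim: deg_le_mono)

lemma word_lift_in_free_Y_phi: "w \<in> words X \<Longrightarrow> in_free_Y (word_lift w) \<and> phi (word_lift w) = rel w"
proof (induction "length w" arbitrary: w rule: less_induct)
  case less
  show ?case
  proof (cases "length w \<le> E")
    case True
    then have "rel w \<in> R_low" using less.prems by (rule rel_R_low[rotated])
    with True show ?thesis by (simp add: word_lift_short linear_Y_in_free_Y lift_linear_Y phi_lift)
  next
    case False
    then have E: "E < length w" by simp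
    then obtain v u where w_split: "w = v @ u" and v: "v \<in> words X" and u: "u \<in> words X" "length u = D + 1"
      and shorter: "length v < length w" "length u < length w"
      and vt: "\<And>t. t \<in> supp (rho u) \<Longrightarrow> v @ t \<in> words X \<and> length (v @ t) < length w"
      using long_word_splitE[OF less.prems] by blast
    have eq: "word_lift w = word_lift v * word_lift u + lin_ext (\<lambda>t. word_lift (v @ t)) (rho u) + lift (defect v u)"
      using word_lift_split[OF v u] w_split E by simp
    have defect: "defect v u \<in> R_low" using defect_R_low[OF v u] .
    have "in_free_Y (word_lift w)" unfolding eq
    proof (intro all_keys_add in_free_mult all_keys_lin_ext)
      show "in_free_Y (word_lift v)" "in_free_Y (word_lift u)" using less.hyps shorter v u by auto
      show "in_free_Y (lift (defect v u))" using lift_linear_Y[OF defect] by (rule linear_Y_in_free_Y)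
      fix t assume "t \<in> supp (rho u)"
      then show "in_free_Y (word_lift (v @ t))" using less.hyps vt by auto
    qed
    moreover have "phi (word_lift w) = rel w"
    proof -
      have "phi (word_lift w) = rel v * rel u + lin_ext (\<lambda>t. rel (v @ t)) (rho u) + defect v u"
        unfolding eq phi_add phi_mult phi_lin_ext phi_lift[OF defect] using less.hyps shorter v u vt
        by (auto intro!: lin_ext_cong)
      also have "\<dots> = rel w" using w_split by (simp add: defect_def)
      finally show ?thesis .
    qed
    ultimately show ?thesis by simp
  qed
qed

lemma word_lift_in_free_Y: "w \<in> words X \<Longrightarrow> in_free_Y (word_lift w)" using word_lift_in_free_Y_phi by blast
lemma phi_word_lift: "w \<in> words X \<Longrightarrow> phi (word_lift w) = rel w" using word_lift_in_free_Y_phi by blast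

text \<open>Only finitely many words have length at most \<open>2 E\<close>, so their lifts have a common degree
  bound.\<close>

definition "lift_deg = Max (insert 1 ((\<lambda>b. Max (insert 0 (length ` supp (word_lift b)))) ` {b. b \<in> words X \<and> length b \<le> 2*E}))"

lemma lift_deg_ge1: "1 \<le> lift_deg"
  unfolding lift_deg_def by (rule Max_ge) (auto intro: finite_words_le[OF finX])

lemma word_lift_deg_le: assumes "b \<in> words X" "length b \<le> 2*E" shows "deg_le (word_lift b) lift_deg"
  unfolding all_keys_def
proof
  fix m assume "m \<in> supp (word_lift b)"
  then have "length m \<le> Max (insert 0 (length ` supp (word_lift b)))" by (intro Max_ge) auto
  also have "\<dots> \<le> lift_deg" unfolding lift_deg_def using assms
    by (intro Max_ge) (auto intro: finite_words_le[OF finX])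
  finally show "length m \<le> lift_deg" .
qed

definition restrict_long :: "('a list \<Rightarrow> ('z,'k) ncpoly) \<Rightarrow> 'a list \<Rightarrow> ('z,'k) ncpoly" where
  "restrict_long f w = (if E < length w then f w else 0)"

definition "high_lift s = lin_ext (restrict_long word_lift) s"
definition "high_part s = lin_ext (restrict_long rel) s"
definition "low_part s = s - high_part s"
definition "nf s = high_lift s + lift (low_part s)"

lemma R_keys: "s \<in> R \<Longrightarrow> b \<in> supp s \<Longrightarrow> b \<in> words X"
  using R_in_free by (auto simp: all_keys_def)

lemma high_part_R: "s \<in> R \<Longrightarrow> high_part s \<in> R"
  unfolding high_part_def by (rule R_lin_ext) (auto simp: restrict_long_def R_0 rel_in_R R_keys)

lemma coeff_high_part:
  assumes "s \<in> R" "E < length w"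
  shows "coeff (high_part s) w = coeff s w"
proof -
  have "coeff (restrict_long rel b) w = (if b = w then 1 else 0)" if "b \<in> supp s" for b
  proof -
    have "w \<notin> supp (rho b)"
      using rho_deg_le[OF R_keys[OF assms(1) that]] assms(2) unfolding all_keys_def E_def by force
    then show ?thesis
      using assms(2) by (auto simp: restrict_long_def rel_def lookup_minus lookup_mon in_keys_iff)
  qed
  then have "coeff (high_part s) w = (\<Sum>b\<in>supp s. coeff s b * (if b = w then 1 else 0))"
    unfolding high_part_def lookup_lin_ext by (intro sum.cong) auto
  also have "\<dots> = coeff s w"
    by (auto simp: if_distrib sum.delta in_keys_iff cong: if_cong)
  finally show ?thesis .
qed

lemma low_part_R_low:
  assumes "s \<in> R"
  shows "low_part s \<in> R_low"
proof -
  have "low_part s \<in> R" unfolding low_part_def using assms high_part_R by (intro R_diff)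
  moreover have "deg_le (low_part s) E"
    using coeff_high_part[OF assms]
    by (auto simp: all_keys_def low_part_def lookup_minus in_keys_iff) (metis not_le)
  ultimately show ?thesis by (simp add: R_low_def)
qed

lemma nf_in_free_Y: "s \<in> R \<Longrightarrow> in_free_Y (nf s)"
  unfolding nf_def high_lift_def
  by (intro all_keys_add all_keys_lin_ext linear_Y_in_free_Y[OF lift_linear_Y[OF low_part_R_low]])
    (auto simp: restrict_long_def word_lift_in_free_Y R_keys)

lemma phi_high_lift: "s \<in> R \<Longrightarrow> phi (high_lift s) = high_part s"
  unfolding high_lift_def high_part_def phi_lin_ext
  by (rule lin_ext_cong) (auto simp: restrict_long_def phi_word_lift phi_0 R_keys)

lemma phi_nf: "s \<in> R \<Longrightarrow> phi (nf s) = s"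
  by (simp add: nf_def phi_add phi_high_lift phi_lift low_part_R_low) (simp add: low_part_def)

lemma nf_deg_le: assumes "s \<in> R" "deg_le s (2*E)" shows "deg_le (nf s) lift_deg"
  unfolding nf_def high_lift_def
proof (intro all_keys_add all_keys_lin_ext)
  show "deg_le (lift (low_part s)) lift_deg"
    using linear_Y_deg_le[OF lift_linear_Y[OF low_part_R_low[OF assms(1)]]] lift_deg_ge1
    by (rule deg_le_mono)
  fix b assume "b \<in> supp s"
  then show "deg_le (restrict_long word_lift b) lift_deg"
    using assms R_keys[OF assms(1)] word_lift_deg_le[of b] by (auto simp: all_keys_def restrict_long_def)
qed

lemma gen_prod_R: "m \<in> words {..<ngens} \<Longrightarrow> prod_list (map gen m) \<in> R"
proof (induction m)
  case Nil then show ?case by (simp add: words_def)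
next
  case (Cons i m')
  have i: "i < ngens" using Cons.prems by (auto simp: words_def)
  show ?case
  proof (cases "m' = []")
    case True then show ?thesis using gen_R[OF i] by simp
  next
    case False
    then have "m' \<in> words {..<ngens}" using Cons.prems by (auto simp: words_def)
    then show ?thesis using Cons.IH gen_R[OF i] by (simp add: R_mult_R)
  qed
qed

lemma phi_in_free_Y_R: "in_free_Y p \<Longrightarrow> phi p \<in> R"
  unfolding phi_def by (rule R_lin_ext) (auto simp: all_keys_def gen_prod_R)

lemma phi_image: "phi ` {p. in_free_Y p} = R"
  using phi_in_free_Y_R nf_in_free_Y phi_nf by (auto intro!: rev_image_eqI)

definition "kernel_deg = lift_deg + 1"

lemma kernel_deg_ge2: "2 \<le> kernel_deg"
  using lift_deg_ge1 by (simp add: kernel_deg_def)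

definition "kernel_low = {p. in_free_Y p \<and> deg_le p kernel_deg \<and> phi p = 0}"

lemma kernel_low_submodule: "submodule kernel_low"
  unfolding kernel_low_def submodule_def
  by (auto intro: all_keys_add all_keys_smult simp: phi_add phi_smult phi_0)

lemma kernel_low_keys: "kernel_low \<subseteq> {p. supp p \<subseteq> {m. set m \<subseteq> {..<ngens} \<and> length m \<le> kernel_deg}}"
  unfolding kernel_low_def by (auto simp: all_keys_def words_def)

definition "kernel_gens = (SOME B. finite B \<and> B \<subseteq> kernel_low \<and> kernel_low = span B)"

lemma kernel_gens: "finite kernel_gens" "kernel_gens \<subseteq> kernel_low" "kernel_low = span kernel_gens"
proof -
  have "\<exists>B. finite B \<and> B \<subseteq> kernel_low \<and> kernel_low = span B"
    by (rule noetherian_submodule_fg[OF noeth finite_lists_length_le kernel_low_submodule kernel_low_keys])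
      simp
  then show "finite kernel_gens" "kernel_gens \<subseteq> kernel_low" "kernel_low = span kernel_gens"
    unfolding kernel_gens_def by (metis (mono_tags, lifting) someI_ex)+
qed

end

section \<open>The kernel lies in every ideal containing its low-degree part\<close>

locale bounded_reduction_ideal = bounded_reduction X R D rho
  for X :: "'a set" and R :: "('a,'k::comm_ring_1) ncpoly set" and D rho +
  fixes J :: "(nat,'k) ncpoly set"
  assumes J_ideal: "nc_ideal {..<ngens} J" and kernel_gens_J: "kernel_gens \<subseteq> J"
begin

definition cong_J :: "(nat,'k) ncpoly \<Rightarrow> (nat,'k) ncpoly \<Rightarrow> bool" where
  "cong_J a b \<longleftrightarrow> a - b \<in> J"

lemma J_submodule: "submodule J"
  using J_ideal by (simp add: nc_ideal_def)

lemma cong_J_refl: "cong_J a a"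
  using J_submodule by (simp add: cong_J_def submodule_def)

lemma cong_J_add: "cong_J a b \<Longrightarrow> cong_J c d \<Longrightarrow> cong_J (a + c) (b + d)"
proof -
  assume "cong_J a b" "cong_J c d"
  then have "(a - b) + (c - d) \<in> J" using J_submodule by (simp add: cong_J_def submodule_def)
  then show ?thesis by (simp add: cong_J_def algebra_simps)
qed

lemma cong_J_smult: "cong_J a b \<Longrightarrow> cong_J (smult c a) (smult c b)"
  using J_submodule by (simp add: cong_J_def submodule_def smult_diff_right[symmetric])

lemma cong_J_neg: "cong_J a b \<Longrightarrow> cong_J (- a) (- b)"
  using cong_J_smult[of a b "-1"] by (simp add: smult_minus_left)

lemma cong_J_sym: "cong_J a b \<Longrightarrow> cong_J b a"
  using cong_J_neg[of a b] by (simp add: cong_J_def)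

lemma cong_J_trans [trans]: "cong_J a b \<Longrightarrow> cong_J b c \<Longrightarrow> cong_J a c"
  using cong_J_add[of a b b c] by (simp add: cong_J_def)

lemma cong_J_mult_right: "cong_J a b \<Longrightarrow> in_free_Y p \<Longrightarrow> cong_J (a * p) (b * p)"
  using J_ideal by (simp add: cong_J_def nc_ideal_def left_diff_distrib[symmetric])

lemma cong_J_mult_left: "cong_J a b \<Longrightarrow> in_free_Y p \<Longrightarrow> cong_J (p * a) (p * b)"
  using J_ideal by (simp add: cong_J_def nc_ideal_def right_diff_distrib[symmetric])

lemma low_deg_cong:
  assumes "in_free_Y p" "in_free_Y q" "deg_le p kernel_deg" "deg_le q kernel_deg" "phi p = phi q"
  shows "cong_J p q"
proof -
  have "p - q \<in> kernel_low" using assms by (auto simp: kernel_low_def phi_diff intro: all_keys_diff)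
  then have "p - q \<in> span kernel_gens" using kernel_gens by simp
  also have "span kernel_gens \<subseteq> J" using span_subset[OF J_submodule kernel_gens_J] .
  finally show ?thesis by (simp add: cong_J_def)
qed

lemma low_deg_cong_nf:
  assumes "in_free_Y q" "deg_le q kernel_deg" "s \<in> R" "deg_le s (2 * E)" "phi q = s"
  shows "cong_J q (nf s)"
  using assms nf_in_free_Y[OF assms(3)] nf_deg_le[OF assms(3,4)] phi_nf[OF assms(3)]
  by (intro low_deg_cong) (auto simp: kernel_deg_def elim: deg_le_mono)

lemma linear_cong:
  assumes "l \<in> linear_Y" "l' \<in> linear_Y" "phi l = phi l'"
  shows "cong_J l l'"
  using assms kernel_deg_ge2
  by (intro low_deg_cong linear_Y_in_free_Y) (auto intro: deg_le_mono[OF linear_Y_deg_le])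

lemma linear_cong_nf: "l \<in> linear_Y \<Longrightarrow> cong_J l (nf (phi l))"
  using phi_linear_Y[of l] kernel_deg_ge2
  by (intro low_deg_cong_nf linear_Y_in_free_Y R_low_R)
    (auto intro: deg_le_mono[OF linear_Y_deg_le] deg_le_mono[OF R_low_deg_le])

lemma linear_mult_cong_nf:
  assumes l: "l \<in> linear_Y" and l': "l' \<in> linear_Y"
  shows "cong_J (l * l') (nf (phi l * phi l'))"
proof (rule low_deg_cong_nf)
  show "in_free_Y (l * l')" using l l' by (intro in_free_mult linear_Y_in_free_Y)
  have "deg_le (l * l') (1 + 1)" using l l' by (intro deg_le_mult linear_Y_deg_le)
  then show "deg_le (l * l') kernel_deg" by (rule deg_le_mono) (use kernel_deg_ge2 in simp)
  show "phi l * phi l' \<in> R" using l l' by (intro R_mult_R R_low_R phi_linear_Y)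
  have "deg_le (phi l * phi l') (E + E)"
    using l l' by (intro deg_le_mult R_low_deg_le phi_linear_Y)
  then show "deg_le (phi l * phi l') (2 * E)" by (simp add: mult_2)
qed (simp add: phi_mult)

lemma nf_0: "cong_J (nf 0) 0"
proof -
  have "nf 0 = lift 0" by (simp add: nf_def high_lift_def low_part_def high_part_def)
  moreover have "0 \<in> R_low" using R_low_submodule by (simp add: submodule_def)
  ultimately show ?thesis
    by (auto intro!: linear_cong lift_linear_Y linear_Y_0 simp: phi_lift phi_0)
qed

lemma nf_add:
  assumes "s \<in> R" "t \<in> R"
  shows "cong_J (nf (s + t)) (nf s + nf t)"
proof -
  have low: "low_part s \<in> R_low" "low_part t \<in> R_low" using low_part_R_low assms by auto
  then have "low_part s + low_part t \<in> R_low" using R_low_submodule by (simp add: submodule_def)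
  with low have "cong_J (lift (low_part s + low_part t)) (lift (low_part s) + lift (low_part t))"
    by (intro linear_cong linear_Y_add lift_linear_Y) (auto simp: phi_lift phi_add)
  then show ?thesis
    by (simp add: cong_J_def nf_def high_lift_def low_part_def high_part_def lin_ext_add algebra_simps)
qed

lemma nf_smult:
  assumes "s \<in> R"
  shows "cong_J (nf (smult c s)) (smult c (nf s))"
proof -
  have low: "low_part s \<in> R_low" using low_part_R_low assms by auto
  then have "smult c (low_part s) \<in> R_low" using R_low_submodule by (simp add: submodule_def)
  with low have "cong_J (lift (smult c (low_part s))) (smult c (lift (low_part s)))"
    by (intro linear_cong linear_Y_smult lift_linear_Y) (auto simp: phi_lift phi_smult)
  then show ?thesis
    by (simp add: cong_J_def nf_def high_lift_def low_part_def high_part_def lin_ext_smult smult_add_right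
        smult_diff_right algebra_simps)
qed

lemma cong_nf_add:
  "cong_J a (nf s) \<Longrightarrow> cong_J b (nf t) \<Longrightarrow> s \<in> R \<Longrightarrow> t \<in> R \<Longrightarrow> cong_J (a + b) (nf (s + t))"
  by (rule cong_J_trans[OF cong_J_add cong_J_sym[OF nf_add]])

lemma cong_nf_smult: "cong_J a (nf s) \<Longrightarrow> s \<in> R \<Longrightarrow> cong_J (smult c a) (nf (smult c s))"
  by (rule cong_J_trans[OF cong_J_smult cong_J_sym[OF nf_smult]])

lemma cong_nf_diff:
  assumes "cong_J a (nf s)" "cong_J b (nf t)" "s \<in> R" "t \<in> R"
  shows "cong_J (a - b) (nf (s - t))"
  using cong_nf_add[OF assms(1) cong_nf_smult[OF assms(2,4), of "-1"] assms(3) R_smult[OF assms(4)]]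
  by (simp add: smult_minus_left)

lemma cong_nf_sum:
  "(\<And>i. i \<in> S \<Longrightarrow> cong_J (f i) (nf (g i)) \<and> g i \<in> R) \<Longrightarrow> cong_J (sum f S) (nf (sum g S))"
  by (induction S rule: infinite_finite_induct)
    (auto intro: cong_J_sym[OF nf_0] cong_nf_add R_sum)

lemma cong_nf_lin_ext:
  "(\<And>b. b \<in> supp p \<Longrightarrow> cong_J (f b) (nf (g b)) \<and> g b \<in> R) \<Longrightarrow> cong_J (lin_ext f p) (nf (lin_ext g p))"
  unfolding lin_ext_def by (rule cong_nf_sum) (auto intro: cong_nf_smult R_smult)

lemma word_lift_cong_nf:
  assumes w: "w \<in> words X"
  shows "cong_J (word_lift w) (nf (rel w))"
proof (cases "length w \<le> E")
  case True
  then show ?thesis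
    using linear_cong_nf[OF lift_linear_Y[OF rel_R_low[OF w True]]]
    by (simp add: word_lift_short phi_lift[OF rel_R_low[OF w True]])
next
  case False
  have "lin_ext (restrict_long f) (rho w) = 0" for f :: "'a list \<Rightarrow> ('z,'k) ncpoly"
    using rho_keys[OF w] by (force simp: lin_ext_def restrict_long_def E_def intro!: sum.neutral)
  with False have "high_lift (rel w) = word_lift w" "high_part (rel w) = rel w"
    by (simp_all add: high_lift_def high_part_def rel_def lin_ext_diff lin_ext_mon restrict_long_def)
  then have "nf (rel w) = word_lift w + nf 0"
    by (simp add: nf_def low_part_def high_lift_def high_part_def)
  then show ?thesis
    using cong_J_add[OF cong_J_refl nf_0, of "word_lift w"] by (simp add: cong_J_sym)
qed

lemma word_lift_mult_cong:
  assumes v: "v \<in> words X" "E < length v" and u: "u \<in> words X" "length u = D + 1"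
  shows "cong_J (word_lift v * word_lift u) (nf (rel v * rel u))"
proof -
  have vu: "v @ u \<in> words X" using v u by (intro words_append)
  have vt: "t \<in> supp (rho u) \<Longrightarrow> v @ t \<in> words X" for t
    using rho_keys[OF u(1)] v by (auto intro: words_append)
  have defect: "defect v u \<in> R_low" using defect_R_low v u by blast
  have "word_lift v * word_lift u
      = word_lift (v @ u) - lin_ext (\<lambda>t. word_lift (v @ t)) (rho u) - lift (defect v u)"
    using word_lift_split[of v u] v u by simp
  also have "cong_J \<dots> (nf (rel (v @ u) - lin_ext (\<lambda>t. rel (v @ t)) (rho u) - defect v u))"
  proof (intro cong_nf_diff word_lift_cong_nf cong_nf_lin_ext conjI rel_in_R R_lin_ext R_diff)
    show "cong_J (lift (defect v u)) (nf (defect v u))"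
      using linear_cong_nf[OF lift_linear_Y[OF defect]] by (simp add: phi_lift[OF defect])
  qed (use vu vt defect R_low_R in auto)
  also have "rel (v @ u) - lin_ext (\<lambda>t. rel (v @ t)) (rho u) - defect v u = rel v * rel u"
    by (simp add: defect_def)
  finally show ?thesis .
qed

lemma nf_mult_word_lift_cong:
  assumes s: "s \<in> R" and u: "u \<in> words X" "length u = D + 1"
  shows "cong_J (nf s * word_lift u) (nf (s * rel u))"
proof -
  have u_short: "length u \<le> E" using u by (simp add: E_def)
  have low: "low_part s \<in> R_low" using low_part_R_low[OF s] .
  have rel_u: "rel u \<in> R_low" using rel_R_low[OF u(1) u_short] .
  have high: "cong_J (lin_ext (\<lambda>b. restrict_long word_lift b * word_lift u) s)
      (nf (lin_ext (\<lambda>b. restrict_long rel b * rel u) s))"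
  proof (rule cong_nf_lin_ext)
    fix b assume "b \<in> supp s"
    then have "b \<in> words X" using R_keys[OF s] by blast
    then show "cong_J (restrict_long word_lift b * word_lift u) (nf (restrict_long rel b * rel u)) \<and> restrict_long rel b * rel u \<in> R"
      using word_lift_mult_cong[OF _ _ u] cong_J_sym[OF nf_0] R_0 R_mult_R[OF rel_in_R rel_in_R[OF u(1)]]
      by (auto simp: restrict_long_def)
  qed
  have "nf s * word_lift u = lin_ext (\<lambda>b. restrict_long word_lift b * word_lift u) s + lift (low_part s) * lift (rel u)"
    by (simp add: nf_def high_lift_def restrict_long_def distrib_right lin_ext_mult_right word_lift_short[OF u_short])
  also have "cong_J \<dots> (nf (lin_ext (\<lambda>b. restrict_long rel b * rel u) s + low_part s * rel u))"
    using linear_mult_cong_nf[OF lift_linear_Y[OF low] lift_linear_Y[OF rel_u]] R_low_R[OF low] u(1)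
    by (intro cong_nf_add[OF high])
      (auto simp: phi_lift low rel_u restrict_long_def R_0 intro!: R_lin_ext R_mult_R rel_in_R R_keys[OF s])
  also have "lin_ext (\<lambda>b. restrict_long rel b * rel u) s + low_part s * rel u = s * rel u"
    by (simp add: low_part_def high_part_def lin_ext_mult_right[symmetric] distrib_right[symmetric])
  finally show ?thesis .
qed

lemma linear_mult_word_lift_cong:
  assumes l: "l \<in> linear_Y" and "w \<in> words X"
  shows "cong_J (l * word_lift w) (nf (phi l * rel w))"
  using assms(2)
proof (induction "length w" arbitrary: w rule: less_induct)
  case less
  note w = less.prems
  have g: "phi l \<in> R" using R_low_R[OF phi_linear_Y[OF l]] .
  show ?case
  proof (cases "length w \<le> E")
    case True
    then show ?thesis
      using linear_mult_cong_nf[OF l lift_linear_Y[OF rel_R_low[OF w True]]]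
      by (simp add: word_lift_short phi_lift rel_R_low w)
  next
    case False
    have E: "E < length w" using False by simp
    then obtain v u where w_split: "w = v @ u" and v: "v \<in> words X" and u: "u \<in> words X" "length u = D + 1"
      and shorter: "length v < length w"
      and vt: "\<And>t. t \<in> supp (rho u) \<Longrightarrow> v @ t \<in> words X \<and> length (v @ t) < length w"
      using long_word_splitE[OF less.prems] by blast
    have defect: "defect v u \<in> R_low" using defect_R_low[OF v u] .
    have c1: "cong_J (l * word_lift v * word_lift u) (nf (phi l * rel v * rel u))"
      using cong_J_mult_right[OF less.hyps[OF shorter v] word_lift_in_free_Y[OF u(1)]]
        nf_mult_word_lift_cong[OF R_mult_R[OF g rel_in_R[OF v]] u]
      by (rule cong_J_trans)
    have c2: "cong_J (lin_ext (\<lambda>t. l * word_lift (v @ t)) (rho u))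
        (nf (lin_ext (\<lambda>t. phi l * rel (v @ t)) (rho u)))"
      using less.hyps vt by (intro cong_nf_lin_ext conjI R_mult_R[OF g] rel_in_R) auto
    have c3: "cong_J (l * lift (defect v u)) (nf (phi l * defect v u))"
      using linear_mult_cong_nf[OF l lift_linear_Y[OF defect]] by (simp add: phi_lift[OF defect])
    have "l * word_lift w = l * word_lift v * word_lift u
        + lin_ext (\<lambda>t. l * word_lift (v @ t)) (rho u) + l * lift (defect v u)"
      using word_lift_split[OF v u] w_split E by (simp add: distrib_left lin_ext_mult_left mult.assoc)
    also have "cong_J \<dots> (nf (phi l * rel v * rel u
        + lin_ext (\<lambda>t. phi l * rel (v @ t)) (rho u) + phi l * defect v u))"
      using g v u vt R_low_R[OF defect]
      by (intro cong_nf_add c1 c2 c3) (auto intro!: R_add R_mult_R R_lin_ext rel_in_R)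
    also have "phi l * rel v * rel u + lin_ext (\<lambda>t. phi l * rel (v @ t)) (rho u) + phi l * defect v u
        = phi l * (rel v * rel u + lin_ext (\<lambda>t. rel (v @ t)) (rho u) + defect v u)"
      by (simp add: distrib_left lin_ext_mult_left mult.assoc)
    also have "rel v * rel u + lin_ext (\<lambda>t. rel (v @ t)) (rho u) + defect v u = rel w"
      using w_split by (simp add: defect_def)
    finally show ?thesis .
  qed
qed

lemma linear_mult_nf_cong:
  assumes l: "l \<in> linear_Y" and s: "s \<in> R"
  shows "cong_J (l * nf s) (nf (phi l * s))"
proof -
  have g: "phi l \<in> R" using R_low_R[OF phi_linear_Y[OF l]] .
  have low: "low_part s \<in> R_low" using low_part_R_low[OF s] .
  have high: "cong_J (lin_ext (\<lambda>b. l * restrict_long word_lift b) s)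
      (nf (lin_ext (\<lambda>b. phi l * restrict_long rel b) s))"
  proof (rule cong_nf_lin_ext)
    fix b assume "b \<in> supp s"
    then have "b \<in> words X" using R_keys[OF s] by blast
    then show "cong_J (l * restrict_long word_lift b) (nf (phi l * restrict_long rel b))
        \<and> phi l * restrict_long rel b \<in> R"
      using linear_mult_word_lift_cong[OF l] cong_J_sym[OF nf_0] R_0 R_mult_R[OF g rel_in_R]
      by (auto simp: restrict_long_def)
  qed
  have "l * nf s = lin_ext (\<lambda>b. l * restrict_long word_lift b) s + l * lift (low_part s)"
    by (simp add: nf_def high_lift_def distrib_left lin_ext_mult_left)
  also have "cong_J \<dots> (nf (lin_ext (\<lambda>b. phi l * restrict_long rel b) s + phi l * low_part s))"
    using linear_mult_cong_nf[OF l lift_linear_Y[OF low]] R_low_R[OF low] g s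
    by (intro cong_nf_add[OF high])
      (auto simp: phi_lift low restrict_long_def R_0 intro!: R_lin_ext R_mult_R rel_in_R R_keys[OF s])
  also have "lin_ext (\<lambda>b. phi l * restrict_long rel b) s + phi l * low_part s = phi l * s"
    by (simp add: low_part_def high_part_def lin_ext_mult_left[symmetric] distrib_left[symmetric])
  finally show ?thesis .
qed

lemma mon_cong_nf: "m \<in> words {..<ngens} \<Longrightarrow> cong_J (mon m) (nf (phi (mon m)))"
proof (induction m)
  case Nil
  then show ?case by (simp add: words_def)
next
  case (Cons i m)
  have i: "mon [i] \<in> linear_Y" using Cons.prems by (intro mon_linear_Y) (auto simp: words_def)
  show ?case
  proof (cases "m = []")
    case True
    then show ?thesis using linear_cong_nf[OF i] by simp
  next
    case False
    then have m: "m \<in> words {..<ngens}" using Cons.prems by (auto simp: words_def)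
    have split: "mon (i # m) = mon [i] * mon m" using mon_append[of "[i]" m] by simp
    have "cong_J (mon (i # m)) (mon [i] * nf (phi (mon m)))"
      unfolding split using Cons.IH[OF m] linear_Y_in_free_Y[OF i] by (rule cong_J_mult_left)
    also have "cong_J \<dots> (nf (phi (mon [i]) * phi (mon m)))"
      using m by (intro linear_mult_nf_cong[OF i]) (simp add: phi_mon gen_prod_R)
    also have "phi (mon [i]) * phi (mon m) = phi (mon (i # m))"
      by (simp add: split phi_mult)
    finally show ?thesis .
  qed
qed

lemma cong_nf_phi:
  assumes "in_free_Y p"
  shows "cong_J p (nf (phi p))"
proof -
  have "cong_J (lin_ext mon p) (nf (lin_ext (\<lambda>m. phi (mon m)) p))"
    using assms mon_cong_nf by (intro cong_nf_lin_ext) (auto simp: all_keys_def phi_mon gen_prod_R)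
  then show ?thesis by (simp add: phi_lin_ext[of mon p, unfolded lin_ext_mon_id] lin_ext_mon_id)
qed

lemma kernel_in_J:
  assumes "in_free_Y p" "phi p = 0"
  shows "p \<in> J"
proof -
  have "cong_J p (nf 0)" using cong_nf_phi[OF assms(1)] assms(2) by simp
  also have "cong_J (nf 0) 0" by (rule nf_0)
  finally show ?thesis by (simp add: cong_J_def)
qed

end

lemma (in bounded_reduction) kernel_gens_in_kernel: "g \<in> kernel_gens \<Longrightarrow> in_free_Y g \<and> phi g = 0"
  using kernel_gens(2) by (auto simp: kernel_low_def)

lemma (in bounded_reduction) kernel_subset_ideal:
  assumes "nc_ideal {..<ngens} J" "kernel_gens \<subseteq> J" "in_free_Y p" "phi p = 0"
  shows "p \<in> J"
proof -
  interpret bounded_reduction_ideal X R D rho J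
    using assms(1,2) by unfold_locales
  show ?thesis using assms(3,4) by (rule kernel_in_J)
qed

section \<open>Transfer to coefficient functions\<close>

lemma append_eq_iff_take_drop:
  "a @ b = w \<longleftrightarrow> (\<exists>i\<in>{0..length w}. a = take i w \<and> b = drop i w)"
  by (auto intro!: bexI[of _ "length a"])

lemma fa_mult_coeff: "fa_mult (coeff p) (coeff q) = coeff (p * q :: ('a,'k::comm_ring_1) ncpoly)"
proof
  fix w :: "'a list"
  define h where "h = (\<lambda>x::'a list \<times> 'a list. coeff p (fst x) * coeff q (snd x))"
  define S where "S = (\<lambda>i. (take i w, drop i w)) ` {0..length w}"
  define K where "K = supp p \<times> supp q"
  have fin: "finite K" "finite S" by (simp_all add: K_def S_def)
  have inj: "inj_on (\<lambda>i. (take i w, drop i w)) {0..length w}"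
    by (rule inj_onI) (metis append_take_drop_id length_take min.absorb2 atLeastAtMost_iff prod.inject)
  have "fa_mult (coeff p) (coeff q) w = (\<Sum>x\<in>S. h x)"
    unfolding fa_mult_def S_def h_def by (subst sum.reindex[OF inj]) simp
  also have "\<dots> = (\<Sum>x\<in>S \<inter> K. h x)"
    by (rule sum.mono_neutral_right) (auto simp: fin h_def K_def in_keys_iff)
  also have "\<dots> = (\<Sum>x\<in>K. if x \<in> S then h x else 0)"
    by (simp add: sum.inter_restrict[OF fin(1)] Int_commute)
  also have "\<dots> = (\<Sum>x\<in>K. if fst x @ snd x = w then h x else 0)"
    by (rule sum.cong) (auto simp: S_def append_eq_iff_take_drop image_iff)
  also have "\<dots> = (\<Sum>a\<in>supp p. \<Sum>b\<in>supp q. if a + b = w then coeff p a * coeff q b else 0)"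
    unfolding K_def h_def by (simp add: sum.cartesian_product plus_list_def split_def)
  also have "\<dots> = coeff (p * q) w" by (simp add: lookup_mult_keys)
  finally show "fa_mult (coeff p) (coeff q) w = coeff (p * q) w" .
qed

lemma fa_smult_coeff: "fa_smult c (coeff p) = coeff (smult c p)"
  by (simp add: fa_smult_def fun_eq_iff)

lemma fa_add_coeff: "(\<lambda>w. coeff p w + coeff q w) = coeff (p + q)"
  by (simp add: fun_eq_iff lookup_add)

lemma coeff_zero_fun: "coeff 0 = (\<lambda>_. 0)"
  by (simp add: fun_eq_iff)

lemma coeff_eq_zero_iff: "coeff p = (\<lambda>_. 0) \<longleftrightarrow> p = 0"
  by (auto simp: fun_eq_iff intro: poly_mapping_eqI)

lemma coeff_in_free_alg_iff: "coeff q \<in> free_alg X \<longleftrightarrow> in_free X (q :: ('a,'k::comm_ring_1) ncpoly)"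
  by (auto simp: free_alg_def all_keys_def words_def in_keys_iff)

lemma free_alg_eq_coeff_image: "free_alg X = coeff ` {q :: ('a,'k::comm_ring_1) ncpoly. in_free X q}"
proof (intro equalityI subsetI)
  fix p :: "'a list \<Rightarrow> 'k" assume p: "p \<in> free_alg X"
  then have "coeff (Abs_poly_mapping p) = p" by (simp add: free_alg_def)
  with p show "p \<in> coeff ` {q :: ('a,'k) ncpoly. in_free X q}"
    by (metis coeff_in_free_alg_iff image_eqI mem_Collect_eq)
qed (auto simp: coeff_in_free_alg_iff)

lemma coeff_preimage_right_ideal:
  fixes R :: "('a list \<Rightarrow> 'k::comm_ring_1) set"
  assumes "right_ideal X R"
  defines "R' \<equiv> {q :: ('a,'k) ncpoly. coeff q \<in> R}"
  shows "R = coeff ` R'" and "\<And>p. p \<in> R' \<Longrightarrow> in_free X p" and "submodule R'"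
    and "\<And>p q. p \<in> R' \<Longrightarrow> in_free X q \<Longrightarrow> p * q \<in> R'"
proof -
  have R: "R \<subseteq> free_alg X" "(\<lambda>_. 0) \<in> R" "\<And>a b. a \<in> R \<Longrightarrow> b \<in> R \<Longrightarrow> (\<lambda>w. a w + b w) \<in> R"
    "\<And>c a. a \<in> R \<Longrightarrow> fa_smult c a \<in> R" "\<And>a p. a \<in> R \<Longrightarrow> p \<in> free_alg X \<Longrightarrow> fa_mult a p \<in> R"
    using assms(1) unfolding right_ideal_def by blast+
  show "R = coeff ` R'" using R(1) by (auto simp: R'_def free_alg_eq_coeff_image)
  show "\<And>p. p \<in> R' \<Longrightarrow> in_free X p" using R(1) by (auto simp: R'_def coeff_in_free_alg_iff[symmetric])
  show "submodule R'"
    using R(2) unfolding submodule_def R'_def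
    by (auto simp: coeff_zero_fun fa_add_coeff[symmetric] fa_smult_coeff[symmetric] intro: R(3,4))
  show "\<And>p q. p \<in> R' \<Longrightarrow> in_free X q \<Longrightarrow> p * q \<in> R'"
    using R(5) by (auto simp: R'_def coeff_in_free_alg_iff[symmetric] fa_mult_coeff[symmetric])
qed

lemma coeff_preimage_two_sided_ideal:
  assumes "two_sided_ideal X I"
  shows "nc_ideal X {q :: ('a,'k::comm_ring_1) ncpoly. coeff q \<in> I}"
  using assms unfolding two_sided_ideal_def nc_ideal_def submodule_def
  by (auto simp: coeff_zero_fun fa_add_coeff[symmetric] fa_smult_coeff[symmetric] fa_mult_coeff[symmetric]
      coeff_in_free_alg_iff[symmetric])

lemma fg_quotient_bounded_reduction:
  fixes R :: "('a list \<Rightarrow> 'k::comm_ring_1) set"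
  assumes "quotient_fg_module X R"
  obtains rho :: "'a list \<Rightarrow> ('a,'k) ncpoly" and D :: nat
  where "\<And>w. w \<in> words X \<Longrightarrow> in_free X (rho w) \<and> deg_le (rho w) D \<and> coeff (mon w - rho w) \<in> R"
proof -
  obtain F where F: "finite F" "F \<subseteq> free_alg X"
    "\<And>p. p \<in> free_alg X \<Longrightarrow> \<exists>c. (\<lambda>w. p w - (\<Sum>f\<in>F. c f * f w)) \<in> R"
    using assms unfolding quotient_fg_module_def by blast
  define P where "P f = (Abs_poly_mapping f :: ('a,'k) ncpoly)" for f
  define D where "D = Max (insert 0 (\<Union>f\<in>F. length ` supp (P f)))"
  have P: "coeff (P f) = f" "in_free X (P f)" "deg_le (P f) D" if "f \<in> F" for f
  proof -
    have "f \<in> free_alg X" using F(2) that by blast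
    then show f: "coeff (P f) = f" by (simp add: P_def free_alg_def)
    show "in_free X (P f)" using coeff_in_free_alg_iff[of "P f" X] f \<open>f \<in> free_alg X\<close> by simp
    show "deg_le (P f) D" unfolding all_keys_def D_def using F(1) that by (intro ballI Max_ge) auto
  qed
  have "\<exists>r. in_free X r \<and> deg_le r D \<and> coeff (mon w - r) \<in> R" if "w \<in> words X" for w
  proof -
    have "coeff (mon w :: ('a,'k) ncpoly) \<in> free_alg X"
      using that by (simp add: coeff_in_free_alg_iff all_keys_mon)
    then obtain c where c: "(\<lambda>v. coeff (mon w :: ('a,'k) ncpoly) v - (\<Sum>f\<in>F. c f * f v)) \<in> R"
      using F(3) by blast
    define r where "r = (\<Sum>f\<in>F. smult (c f) (P f))"
    have "coeff (mon w - r) = (\<lambda>v. coeff (mon w :: ('a,'k) ncpoly) v - (\<Sum>f\<in>F. c f * f v))"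
      by (simp add: r_def lookup_minus lookup_sum P fun_eq_iff)
    moreover have "in_free X r" "deg_le r D" unfolding r_def by (auto intro!: all_keys_sum all_keys_smult P)
    ultimately show ?thesis using c by (intro exI[of _ r]) simp
  qed
  then obtain rho where "\<forall>w. w \<in> words X \<longrightarrow> in_free X (rho w) \<and> deg_le (rho w) D \<and> coeff (mon w - rho w) \<in> R"
    using choice[of "\<lambda>w r. w \<in> words X \<longrightarrow> in_free X r \<and> deg_le r D \<and> coeff (mon w - r) \<in> R"] by meson
  then show ?thesis by (intro that[of rho D]) simp
qed

lemma two_sided_ideal_coeff_image:
  assumes "nc_ideal X N" "\<And>q. q \<in> N \<Longrightarrow> in_free X q"
  shows "two_sided_ideal X (coeff ` (N :: ('a,'k::comm_ring_1) ncpoly set))"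
proof -
  have N: "0 \<in> N" "\<And>p q. p \<in> N \<Longrightarrow> q \<in> N \<Longrightarrow> p + q \<in> N" "\<And>c p. p \<in> N \<Longrightarrow> smult c p \<in> N"
    "\<And>a p. a \<in> N \<Longrightarrow> in_free X p \<Longrightarrow> p * a \<in> N \<and> a * p \<in> N"
    using assms(1) by (auto simp: nc_ideal_def submodule_def)
  have "(\<lambda>_. 0) \<in> coeff ` N" using image_eqI[of _ coeff 0, OF coeff_zero_fun[symmetric] N(1)] .
  then show ?thesis
    unfolding two_sided_ideal_def free_alg_eq_coeff_image
    using N assms(2)
    by (auto simp: fa_add_coeff fa_smult_coeff fa_mult_coeff coeff_in_free_alg_iff[symmetric])
qed

lemma alg_hom_onto_coeff_conj:
  fixes phi :: "(nat,'k::comm_ring_1) ncpoly \<Rightarrow> ('a,'k) ncpoly"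
  assumes add: "\<And>p q. phi (p + q) = phi p + phi q" and mult: "\<And>p q. phi (p * q) = phi p * phi q"
    and smult: "\<And>c p. phi (smult c p) = smult c (phi p)"
  shows "alg_hom_onto Y X (coeff ` phi ` {p. in_free Y p}) (\<lambda>f. coeff (phi (Abs_poly_mapping f)))"
    (is "alg_hom_onto Y X _ ?psi")
proof -
  have psi: "?psi (coeff q) = coeff (phi q)" for q by simp
  show ?thesis
    unfolding alg_hom_onto_def free_alg_eq_coeff_image
  proof (intro conjI ballI allI)
    show "?psi ` coeff ` {q. in_free Y q} = coeff ` phi ` {p. in_free Y p}"
      unfolding image_image psi ..
  next
    fix p q :: "nat list \<Rightarrow> 'k"
    assume "p \<in> coeff ` {q. in_free Y q}" "q \<in> coeff ` {q. in_free Y q}"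
    then obtain p' q' where "p = coeff p'" "q = coeff q'" by blast
    then show "?psi (\<lambda>w. p w + q w) = (\<lambda>w. ?psi p w + ?psi q w)"
      and "?psi (fa_mult p q) = fa_mult (?psi p) (?psi q)"
      by (simp_all only: fa_add_coeff fa_mult_coeff psi add mult)
  next
    fix c :: 'k and p :: "nat list \<Rightarrow> 'k"
    assume "p \<in> coeff ` {q. in_free Y q}"
    then obtain p' where "p = coeff p'" by blast
    then show "?psi (fa_smult c p) = fa_smult c (?psi p)"
      by (simp only: fa_smult_coeff psi smult)
  qed
qed

lemma ideal_generated_coeff_image:
  assumes "nc_ideal Y N" "N \<subseteq> {q :: (nat,'k::comm_ring_1) ncpoly. in_free Y q}" "G \<subseteq> N"
    and least: "\<And>J. nc_ideal Y J \<Longrightarrow> G \<subseteq> J \<Longrightarrow> N \<subseteq> J"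
  shows "ideal_generated Y (coeff ` G) = coeff ` N"
proof
  show "coeff ` N \<subseteq> ideal_generated Y (coeff ` G)"
    unfolding ideal_generated_def
  proof (intro Inter_greatest, clarify)
    fix I q assume "two_sided_ideal Y I" "coeff ` G \<subseteq> I" and "q \<in> N"
    then have "q \<in> {q. coeff q \<in> I}"
      using least[OF coeff_preimage_two_sided_ideal] by blast
    then show "coeff q \<in> I" by simp
  qed
  show "ideal_generated Y (coeff ` G) \<subseteq> coeff ` N"
    unfolding ideal_generated_def
    using two_sided_ideal_coeff_image[OF assms(1)] assms(2,3) by (intro Inter_lower) auto
qed

lemma finitely_presented_subI:
  fixes phi :: "(nat,'k::comm_ring_1) ncpoly \<Rightarrow> ('a,'k) ncpoly"
  assumes "finite Y"
    and add: "\<And>p q. phi (p + q) = phi p + phi q" and mult: "\<And>p q. phi (p * q) = phi p * phi q"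
    and smult: "\<And>c p. phi (smult c p) = smult c (phi p)"
    and "finite G" and G: "\<And>g. g \<in> G \<Longrightarrow> in_free Y g \<and> phi g = 0"
    and kernel: "\<And>J p. nc_ideal Y J \<Longrightarrow> G \<subseteq> J \<Longrightarrow> in_free Y p \<Longrightarrow> phi p = 0 \<Longrightarrow> p \<in> J"
  shows "finitely_presented_sub X (coeff ` phi ` {p. in_free Y p})"
proof -
  define N where "N = {q. in_free Y q \<and> phi q = 0}"
  have "phi 0 = 0" using smult[of 0 0] by simp
  then have "nc_ideal Y N"
    unfolding nc_ideal_def submodule_def N_def
    by (auto simp: add smult mult intro: all_keys_add all_keys_smult in_free_mult)
  then have "ideal_generated Y (coeff ` G) = coeff ` N"
    using G kernel by (intro ideal_generated_coeff_image) (auto simp: N_def)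
  also have "coeff ` N = {p \<in> free_alg Y. coeff (phi (Abs_poly_mapping p)) = (\<lambda>_. 0)}"
    by (auto simp: free_alg_eq_coeff_image N_def coeff_eq_zero_iff)
  finally have "coeff ` G \<subseteq> free_alg Y \<and>
      {p \<in> free_alg Y. coeff (phi (Abs_poly_mapping p)) = (\<lambda>_. 0)} = ideal_generated Y (coeff ` G)"
    using G by (auto simp: coeff_in_free_alg_iff)
  then show ?thesis
    using assms(1) alg_hom_onto_coeff_conj[OF add mult smult] \<open>finite G\<close>
    unfolding finitely_presented_sub_def
    by (intro exI[of _ Y] exI[of _ "\<lambda>f. coeff (phi (Abs_poly_mapping f))"] exI[of _ "coeff ` G"]) simp
qed

theorem lemma2p3:
  fixes X :: "'x set" and R :: "('x list \<Rightarrow> 'k::comm_ring_1) set"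
  assumes "noetherian_ring TYPE('k)"
    and "finite X"
    and "right_ideal X R"
    and "quotient_fg_module X R"
  shows "finitely_presented_sub X R"
proof -
  define R' where "R' = {q :: ('x,'k) ncpoly. coeff q \<in> R}"
  note R' = coeff_preimage_right_ideal[OF assms(3), folded R'_def]
  obtain rho :: "'x list \<Rightarrow> ('x,'k) ncpoly" and D
    where rho: "\<And>w. w \<in> words X \<Longrightarrow> in_free X (rho w) \<and> deg_le (rho w) D \<and> coeff (mon w - rho w) \<in> R"
    using fg_quotient_bounded_reduction[OF assms(4)] by blast
  interpret bounded_reduction X R' D rho
    using assms(1,2) R'(2-4) rho by unfold_locales (auto simp: R'_def)
  have "finitely_presented_sub X (coeff ` phi ` {p. in_free_Y p})"
    by (rule finitely_presented_subI[OF _ phi_add phi_mult phi_smult kernel_gens(1)])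
      (auto dest: kernel_gens_in_kernel intro: kernel_subset_ideal)
  then show ?thesis by (simp only: phi_image R'(1)[symmetric])
qed

end
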